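(* Let $G$ be a complete tiered graph on vertex set $[n]$. Then for every $k\ge0$, $\dim_{\mathbb K}\mathcal C_G^{k}=\dim_{\mathbb K}\mathcal S_G^{k}$, where $\mathcal C_G^k$ and $\mathcal S_G^k$ denote the degree-$k$ homogeneous components of $\mathcal C_G$ and $\mathcal S_G$.
   Context: A complete tiered graph on $[n]$ with surjective tiering $\mathbf t:[n]\to[m]$ has edge set exactly $\{\{i,j\}: i<j,\ \mathbf t(i)<\mathbf t(j)\}$. $\mathbb K$ is a field of characteristic $0$. A subset $H\subseteq E(G)$ is slim if $(V(G),E(G)\setminus H)$ is connected. $\Phi_G$ is the commutative $\mathbb K$-algebra generated by variables $\phi_e$, $e\in E(G)$, subject to $\phi_e^2=0$ for all $e$ and $\prod_{e\in H}\phi_e=0$ for every non-slim $H\subseteq E(G)$. $\mathcal C_G$ is the subalgebra of $\Phi_G$ generated by $X_i=\sum_{e\in E(G)}c_{i,e}\phi_e$ ($i\in[n]$), where $c_{i,e}=1$ if $e=\{i,j\}$ with $i<j$, $c_{i,e}=-1$ if $e=\{i,j\}$ with $i>j$, and $c_{i,e}=0$ otherwise; it is graded by degree in the $X_i$. For $e=\{i,j\}$ with $i<j$ let $z_e=z_i-z_j$ and $Z_H=\prod_{e\in H}z_e$; $\mathcal S_G\subseteq\mathbb K[z_1,\dots,z_n]$ is the span of all $Z_H$ with $H$ slim, graded by polynomial degree. *)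

theory Defs
  imports Main "HOL.Vector_Spaces" "HOL-Library.Poly_Mapping"
begin

text \<open>Vertex set [n] = {1..n}; an edge {i,j} with i<j is stored as the pair (i,j).
  The complete tiered graph for tiering t has edges {i,j}, i<j, t i < t j.\<close>

definition tiered_edges :: "nat \<Rightarrow> (nat \<Rightarrow> nat) \<Rightarrow> (nat \<times> nat) set" where
  "tiered_edges n t = {(i, j). i \<in> {1..n} \<and> j \<in> {1..n} \<and> i < j \<and> t i < t j}"

definition graph_connected :: "nat set \<Rightarrow> (nat \<times> nat) set \<Rightarrow> bool" where
  "graph_connected V F \<longleftrightarrow> (\<forall>u\<in>V. \<forall>v\<in>V. (u, v) \<in> (F \<union> F\<inverse>)\<^sup>*)"

definition slim :: "nat \<Rightarrow> (nat \<Rightarrow> nat) \<Rightarrow> (nat \<times> nat) set \<Rightarrow> bool" where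
  "slim n t H \<longleftrightarrow> H \<subseteq> tiered_edges n t \<and> graph_connected {1..n} (tiered_edges n t - H)"

definition sc :: "'a::field \<Rightarrow> (('v \<Rightarrow>\<^sub>0 nat) \<Rightarrow>\<^sub>0 'a) \<Rightarrow> (('v \<Rightarrow>\<^sub>0 nat) \<Rightarrow>\<^sub>0 'a)" where
  "sc c p = Poly_Mapping.map (\<lambda>x. c * x) p"

definition pvar :: "'v \<Rightarrow> (('v \<Rightarrow>\<^sub>0 nat) \<Rightarrow>\<^sub>0 'a::comm_ring_1)" where
  "pvar x = Poly_Mapping.single (Poly_Mapping.single x 1) 1"

definition ideal_gen :: "'r::comm_ring_1 set \<Rightarrow> 'r set" where
  "ideal_gen S = {p. \<exists>F r. finite F \<and> F \<subseteq> S \<and> p = (\<Sum>s\<in>F. r s * s)}"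

definition homog :: "nat \<Rightarrow> (('v \<Rightarrow>\<^sub>0 nat) \<Rightarrow>\<^sub>0 'a::zero) \<Rightarrow> bool" where
  "homog k p \<longleftrightarrow> (\<forall>mon\<in>Poly_Mapping.keys p. (\<Sum>x\<in>Poly_Mapping.keys mon. Poly_Mapping.lookup mon x) = k)"

text \<open>Phi_G = K[phi_e : e in E] / I_G, with I_G generated by phi_e^2 and
  prod_{e in H} phi_e for non-slim H.\<close>
definition Phi_ideal :: "'a itself \<Rightarrow> nat \<Rightarrow> (nat \<Rightarrow> nat) \<Rightarrow> (((nat \<times> nat) \<Rightarrow>\<^sub>0 nat) \<Rightarrow>\<^sub>0 'a::field) set" where
  "Phi_ideal _ n t = ideal_gen
     ({pvar e * pvar e | e. e \<in> tiered_edges n t}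
      \<union> {(\<Prod>e\<in>H. pvar e) | H. H \<subseteq> tiered_edges n t \<and> \<not> slim n t H})"

text \<open>Lift of X_i = sum_e c_{i,e} phi_e to the polynomial ring.\<close>
definition Xpoly :: "nat \<Rightarrow> (nat \<Rightarrow> nat) \<Rightarrow> nat \<Rightarrow> (((nat \<times> nat) \<Rightarrow>\<^sub>0 nat) \<Rightarrow>\<^sub>0 'a::field)" where
  "Xpoly n t i = (\<Sum>e\<in>tiered_edges n t.
      (if fst e = i then pvar e else if snd e = i then - pvar e else 0))"

definition C_gens :: "'a itself \<Rightarrow> nat \<Rightarrow> (nat \<Rightarrow> nat) \<Rightarrow> nat \<Rightarrow> (((nat \<times> nat) \<Rightarrow>\<^sub>0 nat) \<Rightarrow>\<^sub>0 'a::field) set" where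
  "C_gens _ n t k = {(\<Prod>j<k. Xpoly n t (f j)) | f. \<forall>j<k. f j \<in> {1..n}}"

text \<open>dim C_G^k: C_G^k is the image in Phi_G of the span V of the lifted degree-k monomials,
  so its dimension is dim V - dim (V \<inter> I_G) (rank-nullity for the quotient map).\<close>
definition dim_C :: "'a::field itself \<Rightarrow> nat \<Rightarrow> (nat \<Rightarrow> nat) \<Rightarrow> nat \<Rightarrow> nat" where
  "dim_C A n t k =
     (let V = module.span (sc :: 'a \<Rightarrow> _) (C_gens A n t k)
      in vector_space.dim (sc :: 'a \<Rightarrow> _) V
         - vector_space.dim (sc :: 'a \<Rightarrow> _) (V \<inter> Phi_ideal A n t))"

definition Zpoly :: "(nat \<times> nat) set \<Rightarrow> ((nat \<Rightarrow>\<^sub>0 nat) \<Rightarrow>\<^sub>0 'a::field)" where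
  "Zpoly H = (\<Prod>e\<in>H. pvar (fst e) - pvar (snd e))"

definition S_space :: "'a itself \<Rightarrow> nat \<Rightarrow> (nat \<Rightarrow> nat) \<Rightarrow> ((nat \<Rightarrow>\<^sub>0 nat) \<Rightarrow>\<^sub>0 'a::field) set" where
  "S_space _ n t = module.span (sc :: 'a \<Rightarrow> _) {Zpoly H | H. slim n t H}"

definition dim_S :: "'a::field itself \<Rightarrow> nat \<Rightarrow> (nat \<Rightarrow> nat) \<Rightarrow> nat \<Rightarrow> nat" where
  "dim_S A n t k = vector_space.dim (sc :: 'a \<Rightarrow> _) {p \<in> S_space A n t. homog k p}"

end

theory Submission
  imports Defs "HOL-Library.FuncSet"
begin

text \<open>Both dimensions are the rank of one matrix. Modulo \<open>I\<^sub>G\<close>, a polynomial of degree \<open>k\<close> in the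
  \<open>\<phi>\<^sub>e\<close> is determined by its coefficients at the square-free monomials \<open>\<phi>\<^sub>S\<close> with \<open>S\<close> slim,
  \<open>|S| = k\<close>: no generator \<open>\<phi>\<^sub>e\<^sup>2\<close> or \<open>\<phi>\<^sub>H\<close> (\<open>H\<close> not slim) divides such a monomial, and
  every other monomial of degree \<open>k\<close> is divisible by one of them. Hence \<open>dim C\<^sub>G\<^sup>k\<close> is the rank
  of the matrix of coefficients of the \<open>\<phi>\<^sub>S\<close> in the products \<open>X\<^sub>i\<^sub>1 \<cdots> X\<^sub>i\<^sub>k\<close>.
  Multiplying by one more \<open>X\<^sub>v\<close> turns the coefficient of \<open>\<phi>\<^sub>S\<close> into
  \<open>\<Sum>\<^sub>e\<^sub>\<in>\<^sub>S c\<^sub>v\<^sub>,\<^sub>e \<cdot> (coefficient of \<phi>\<^sub>S\<^sub>-\<^sub>e)\<close>, mirroring the Leibniz rule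
  \<open>\<partial>\<^sub>v Z\<^sub>S = \<Sum>\<^sub>e\<^sub>\<in>\<^sub>S c\<^sub>v\<^sub>,\<^sub>e Z\<^sub>S\<^sub>-\<^sub>e\<close>; so that coefficient is \<open>\<alpha>!\<close> times the coefficient of
  \<open>z\<^sup>\<alpha> = z\<^sub>i\<^sub>1 \<cdots> z\<^sub>i\<^sub>k\<close> in \<open>Z\<^sub>S\<close>. In characteristic \<open>0\<close> the factors \<open>\<alpha>!\<close> are invertible,
  so \<open>dim C\<^sub>G\<^sup>k\<close> is the rank of the matrix of coefficients of the \<open>Z\<^sub>S\<close> with \<open>|S| = k\<close>, which is
  \<open>dim S\<^sub>G\<^sup>k\<close> because \<open>Z\<^sub>H\<close> is homogeneous of degree \<open>|H|\<close>.\<close>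

declare One_nat_def [simp del]

abbreviation lookup where "lookup \<equiv> Poly_Mapping.lookup"
abbreviation single where "single \<equiv> Poly_Mapping.single"
abbreviation keys where "keys \<equiv> Poly_Mapping.keys"

section \<open>Polynomials as finitely supported maps\<close>

lemma lookup_sc [simp]: "lookup (sc c p) m = c * lookup p m"
  unfolding sc_def by transfer (simp add: when_def)

interpretation poly: vector_space "sc :: 'a::field \<Rightarrow> (('v \<Rightarrow>\<^sub>0 nat) \<Rightarrow>\<^sub>0 'a) \<Rightarrow> _"
  by unfold_locales (auto intro!: poly_mapping_eqI simp: lookup_add algebra_simps)

lemma sc_eq_mult: "sc c p = single 0 c * p"
  unfolding sc_def by (rule mult_map_scale_conv_mult)

lemma sc_single: "sc c (single m a) = single m (c * a)"
  by (auto intro!: poly_mapping_eqI simp: lookup_single when_def)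

lemma keys_sc: "keys (sc c p) \<subseteq> keys p"
  by (auto simp: in_keys_iff)

lemma sum_single_lookup:
  assumes "finite A" "keys p \<subseteq> A"
  shows "(\<Sum>m\<in>A. single m (lookup p m)) = p"
proof (rule poly_mapping_eqI)
  fix m
  have "(\<Sum>m'\<in>A. lookup (single m' (lookup p m')) m) = (\<Sum>m'\<in>A. if m' = m then lookup p m else 0)"
    by (rule sum.cong) (auto simp: lookup_single when_def)
  also have "\<dots> = lookup p m"
    using assms by (auto simp: in_keys_iff)
  finally show "lookup (\<Sum>m\<in>A. single m (lookup p m)) m = lookup p m"
    by (simp add: lookup_sum)
qed

lemma lookup_single_var_mult:
  fixes Q :: "('v \<Rightarrow>\<^sub>0 nat) \<Rightarrow>\<^sub>0 'a::comm_ring_1"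
  shows "lookup (single (single x 1) c * Q) m
    = (if 0 < lookup m x then c * lookup Q (m - single x 1) else 0)"
proof -
  have "single (single x 1) c * Q = (\<Sum>q\<in>keys Q. single (single x 1 + q) (c * lookup Q q))"
    by (subst sum_single_lookup[of "keys Q" Q, symmetric]) (simp_all add: sum_distrib_left mult_single)
  then have "lookup (single (single x 1) c * Q) m
      = (\<Sum>q\<in>keys Q. if single x 1 + q = m then c * lookup Q q else 0)"
    by (simp add: lookup_sum lookup_single when_def)
  moreover have "single x 1 + q = m \<longleftrightarrow> 0 < lookup m x \<and> q = m - single x 1" for q
  proof
    assume "single x 1 + q = m"
    then show "0 < lookup m x \<and> q = m - single x 1"
      by (auto intro!: poly_mapping_eqI simp: lookup_add lookup_minus lookup_single when_def)
  next
    assume "0 < lookup m x \<and> q = m - single x 1"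
    then show "single x 1 + q = m"
      by (auto intro!: poly_mapping_eqI simp: lookup_add lookup_minus lookup_single when_def)
  qed
  ultimately show ?thesis
    by (cases "0 < lookup m x") (auto simp: in_keys_iff)
qed

lemma lookup_mult_single_eq_0:
  assumes "\<not> (\<exists>a. x = a + m)"
  shows "lookup (r * single m (1::'a::comm_ring_1)) x = 0"
proof -
  have "x \<notin> keys (r * single m 1)"
    using keys_mult[of r "single m (1::'a)"] assms by auto
  then show ?thesis by (simp add: in_keys_iff)
qed

definition mon_deg :: "('v \<Rightarrow>\<^sub>0 nat) \<Rightarrow> nat" where
  "mon_deg m = (\<Sum>x\<in>keys m. lookup m x)"

lemma mon_deg_superset:
  "finite A \<Longrightarrow> keys m \<subseteq> A \<Longrightarrow> mon_deg m = (\<Sum>x\<in>A. lookup m x)"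
  unfolding mon_deg_def by (rule sum.mono_neutral_left) (auto simp: in_keys_iff)

lemma mon_deg_add: "mon_deg (a + b) = mon_deg a + mon_deg b"
proof -
  let ?A = "keys a \<union> keys b"
  have "mon_deg (a + b) = (\<Sum>x\<in>?A. lookup (a + b) x)"
    by (rule mon_deg_superset) (auto dest: set_mp[OF keys_add])
  also have "\<dots> = (\<Sum>x\<in>?A. lookup a x) + (\<Sum>x\<in>?A. lookup b x)"
    by (simp add: lookup_add sum.distrib)
  also have "\<dots> = mon_deg a + mon_deg b"
    using mon_deg_superset[of ?A a] mon_deg_superset[of ?A b] by auto
  finally show ?thesis .
qed

lemma mon_deg_single [simp]: "mon_deg (single x c) = c"
  by (simp add: mon_deg_def)

lemma mon_deg_0 [simp]: "mon_deg 0 = 0"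
  by (simp add: mon_deg_def)

lemma mon_deg_eq_0_iff: "mon_deg m = 0 \<longleftrightarrow> m = 0"
  unfolding mon_deg_def by (auto simp: in_keys_iff intro!: poly_mapping_eqI)

definition set_mon :: "'v set \<Rightarrow> ('v \<Rightarrow>\<^sub>0 nat)" where
  "set_mon S = (\<Sum>x\<in>S. single x 1)"

lemma lookup_set_mon: "finite S \<Longrightarrow> lookup (set_mon S) x = (if x \<in> S then 1 else 0)"
  unfolding set_mon_def by (simp add: lookup_sum lookup_single when_def)

lemma keys_set_mon: "finite S \<Longrightarrow> keys (set_mon S) = S"
  by (auto simp: in_keys_iff lookup_set_mon split: if_splits)

lemma mon_deg_set_mon: "finite S \<Longrightarrow> mon_deg (set_mon S) = card S"
  unfolding mon_deg_def by (simp add: keys_set_mon lookup_set_mon)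

lemma set_mon_minus:
  "finite S \<Longrightarrow> x \<in> S \<Longrightarrow> set_mon S - single x 1 = set_mon (S - {x})"
  by (rule poly_mapping_eqI) (auto simp: lookup_minus lookup_set_mon lookup_single when_def)

lemma prod_pvar:
  "finite S \<Longrightarrow> (\<Prod>x\<in>S. pvar x :: ('v \<Rightarrow>\<^sub>0 nat) \<Rightarrow>\<^sub>0 'a::comm_ring_1) = single (set_mon S) 1"
  by (induction S rule: finite_induct) (simp_all add: set_mon_def pvar_def mult_single)

lemma set_mon_eq_if_no_square:
  assumes "\<forall>x. lookup m x \<le> 1"
  shows "m = set_mon (keys m)"
proof (rule poly_mapping_eqI)
  fix x
  have "lookup m x = 0 \<or> lookup m x = 1" using assms[rule_format, of x] by linarith
  then show "lookup m x = lookup (set_mon (keys m)) x" by (auto simp: lookup_set_mon in_keys_iff)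
qed

definition homog_in :: "'v set \<Rightarrow> nat \<Rightarrow> (('v \<Rightarrow>\<^sub>0 nat) \<Rightarrow>\<^sub>0 'a::zero) \<Rightarrow> bool" where
  "homog_in A d p \<longleftrightarrow> (\<forall>m\<in>keys p. keys m \<subseteq> A \<and> mon_deg m = d)"

lemma homog_iff_homog_in_UNIV: "homog k p \<longleftrightarrow> homog_in UNIV k p"
  by (simp add: homog_def homog_in_def mon_deg_def)

lemma homog_in_mono: "homog_in A d p \<Longrightarrow> A \<subseteq> B \<Longrightarrow> homog_in B d p"
  unfolding homog_in_def by blast

lemma homog_in_single: "keys m \<subseteq> A \<Longrightarrow> mon_deg m = d \<Longrightarrow> homog_in A d (single m c)"
  unfolding homog_in_def by auto

lemma homog_in_add: "homog_in A d p \<Longrightarrow> homog_in A d q \<Longrightarrow> homog_in A d (p + q)"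
  unfolding homog_in_def by (meson UnE keys_add subsetD)

lemma homog_in_diff:
  "homog_in A d (p :: ('v \<Rightarrow>\<^sub>0 nat) \<Rightarrow>\<^sub>0 'a::ab_group_add) \<Longrightarrow> homog_in A d q \<Longrightarrow> homog_in A d (p - q)"
  unfolding homog_in_def by (meson UnE keys_diff subsetD)

lemma homog_in_sc: "homog_in A d p \<Longrightarrow> homog_in A d (sc c p)"
  unfolding homog_in_def using keys_sc by blast

lemma homog_in_sum: "(\<And>i. i \<in> I \<Longrightarrow> homog_in A d (f i)) \<Longrightarrow> homog_in A d (sum f I)"
proof (induction I rule: infinite_finite_induct)
  case (insert x F)
  then show ?case by (simp add: homog_in_add)
qed (simp_all add: homog_in_def)

lemma keys_add_nat: "keys (a + b :: 'v \<Rightarrow>\<^sub>0 nat) = keys a \<union> keys b"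
  by (auto simp: in_keys_iff lookup_add)

lemma homog_in_mult:
  fixes p q :: "('v \<Rightarrow>\<^sub>0 nat) \<Rightarrow>\<^sub>0 'a::comm_ring_1"
  assumes "homog_in A d1 p" "homog_in A d2 q"
  shows "homog_in A (d1 + d2) (p * q)"
  unfolding homog_in_def
proof
  fix m assume "m \<in> keys (p * q)"
  then obtain a b where "m = a + b" "a \<in> keys p" "b \<in> keys q"
    using keys_mult[of p q] by blast
  with assms show "keys m \<subseteq> A \<and> mon_deg m = d1 + d2"
    unfolding homog_in_def by (simp add: keys_add_nat mon_deg_add)
qed

lemma homog_in_prod:
  fixes f :: "'i \<Rightarrow> ('v \<Rightarrow>\<^sub>0 nat) \<Rightarrow>\<^sub>0 'a::comm_ring_1"
  shows "finite I \<Longrightarrow> (\<And>i. i \<in> I \<Longrightarrow> homog_in A 1 (f i)) \<Longrightarrow> homog_in A (card I) (prod f I)"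
proof (induction I rule: finite_induct)
  case empty
  then show ?case by (simp add: homog_in_def)
next
  case (insert x F)
  then show ?case using homog_in_mult[of A 1 "f x" "card F" "prod f F"] by (simp add: One_nat_def)
qed

lemma homog_in_span:
  assumes "\<And>x. x \<in> B \<Longrightarrow> homog_in A d x" and "p \<in> poly.span B"
  shows "homog_in A d p"
proof -
  have "poly.subspace {p. homog_in A d p}"
    by (auto simp: poly.subspace_def homog_in_add homog_in_sc, simp add: homog_in_def)
  then show ?thesis using poly.span_minimal[of B "{p. homog_in A d p}"] assms by blast
qed

lemma homog_part_span_image:
  fixes g :: "'i \<Rightarrow> ('v \<Rightarrow>\<^sub>0 nat) \<Rightarrow>\<^sub>0 'a::field"
  assumes fin: "finite I" and hom: "\<And>i. i \<in> I \<Longrightarrow> homog (d i) (g i)"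
  shows "{p \<in> poly.span (g ` I). homog k p} = poly.span (g ` {i \<in> I. d i = k})"
proof -
  let ?X = "g ` I" and ?X\<^sub>k = "g ` {i \<in> I. d i = k}"
  have hom_k: "homog_in UNIV k x" if "x \<in> ?X\<^sub>k" for x
    using that hom by (auto simp: homog_iff_homog_in_UNIV)
  have "poly.span ?X\<^sub>k \<subseteq> poly.span ?X" by (rule poly.span_mono) blast
  moreover have "homog k p" if "p \<in> poly.span ?X\<^sub>k" for p
    unfolding homog_iff_homog_in_UNIV using hom_k that by (rule homog_in_span)
  moreover have "p \<in> poly.span ?X\<^sub>k" if p: "p \<in> poly.span ?X" "homog k p" for p
  proof -
    obtain u where u: "p = (\<Sum>x\<in>?X. sc (u x) x)"
      using p(1) unfolding poly.span_finite[OF finite_imageI[OF fin]] by blast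
    define q where "q = (\<Sum>x\<in>?X - ?X\<^sub>k. sc (u x) x)"
    have p_q: "p = q + (\<Sum>x\<in>?X\<^sub>k. sc (u x) x)"
      unfolding u q_def by (rule sum.subset_diff) (auto simp: fin)
    have "homog_in UNIV k (\<Sum>x\<in>?X\<^sub>k. sc (u x) x)"
      using hom_k by (simp add: homog_in_sum homog_in_sc)
    moreover have "q = p - (\<Sum>x\<in>?X\<^sub>k. sc (u x) x)" using p_q by simp
    ultimately have "homog_in UNIV k q"
      using homog_in_diff p(2) by (simp add: homog_iff_homog_in_UNIV)
    moreover have "mon_deg m \<noteq> k" if "m \<in> keys q" for m
    proof -
      have "m \<in> (\<Union>x\<in>?X - ?X\<^sub>k. keys (sc (u x) x))"
        using keys_sum[of "\<lambda>x. sc (u x) x" "?X - ?X\<^sub>k"] that unfolding q_def by (rule subsetD)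
      then obtain x where x: "x \<in> ?X" "x \<notin> ?X\<^sub>k" "m \<in> keys (sc (u x) x)" by blast
      from x(1) obtain i where i: "i \<in> I" "x = g i" by (rule imageE)
      with x(2) have "d i \<noteq> k" by blast
      moreover have "m \<in> keys (g i)" using x(3) i(2) keys_sc by blast
      ultimately show ?thesis using hom[OF i(1)] by (simp add: homog_iff_homog_in_UNIV homog_in_def)
    qed
    ultimately have "keys q = {}" unfolding homog_in_def by blast
    then have "q = 0" by simp
    then show ?thesis
      unfolding p_q by (simp add: poly.span_sum poly.span_scale poly.span_base)
  qed
  ultimately show ?thesis by blast
qed

definition pdiff :: "'v \<Rightarrow> (('v \<Rightarrow>\<^sub>0 nat) \<Rightarrow>\<^sub>0 'a::comm_semiring_1) \<Rightarrow> (('v \<Rightarrow>\<^sub>0 nat) \<Rightarrow>\<^sub>0 'a)" where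
  "pdiff v p = Abs_poly_mapping (\<lambda>m. of_nat (lookup m v + 1) * lookup p (m + single v 1))"

lemma lookup_pdiff:
  "lookup (pdiff v p) m = of_nat (lookup m v + 1) * lookup p (m + single v 1)"
proof -
  let ?c = "\<lambda>m. of_nat (lookup m v + 1) * lookup p (m + single v 1)"
  have "{m. ?c m \<noteq> 0} \<subseteq> (\<lambda>m'. m' - single v 1) ` keys p"
  proof
    fix m assume "m \<in> {m. ?c m \<noteq> 0}"
    then have "m + single v 1 \<in> keys p" by (auto simp: in_keys_iff)
    moreover have "m = (m + single v 1) - single v 1"
      by (rule poly_mapping_eqI) (simp add: lookup_add lookup_minus)
    ultimately show "m \<in> (\<lambda>m'. m' - single v 1) ` keys p" by blast
  qed
  then have "finite {m. ?c m \<noteq> 0}" by (rule finite_subset) simp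
  then show ?thesis unfolding pdiff_def by (simp add: Abs_poly_mapping_inverse)
qed

lemma pdiff_diff: "pdiff v (p - q) = pdiff v p - pdiff v (q :: ('v \<Rightarrow>\<^sub>0 nat) \<Rightarrow>\<^sub>0 'a::comm_ring_1)"
  by (rule poly_mapping_eqI) (simp add: lookup_pdiff lookup_minus algebra_simps)

lemma pdiff_pvar_mult:
  fixes Q :: "('v \<Rightarrow>\<^sub>0 nat) \<Rightarrow>\<^sub>0 'a::comm_ring_1"
  shows "pdiff v (pvar a * Q) = (if a = v then Q else 0) + pvar a * pdiff v Q"
proof (rule poly_mapping_eqI)
  fix m :: "'v \<Rightarrow>\<^sub>0 nat"
  have pvar_mult: "lookup (pvar a * P) x = (if 0 < lookup x a then lookup P (x - single a 1) else 0)"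
    for P :: "('v \<Rightarrow>\<^sub>0 nat) \<Rightarrow>\<^sub>0 'a" and x
    unfolding pvar_def lookup_single_var_mult by simp
  have plus_minus: "m + single v 1 - single v 1 = m"
    by (rule poly_mapping_eqI) (simp add: lookup_add lookup_minus)
  show "lookup (pdiff v (pvar a * Q)) m = lookup ((if a = v then Q else 0) + pvar a * pdiff v Q) m"
  proof (cases "0 < lookup m a")
    case True
    have minus_plus: "m - single a 1 + single v 1 = m + single v 1 - single a 1"
      using True by (intro poly_mapping_eqI) (auto simp: lookup_add lookup_minus lookup_single when_def)
    have "m - single a 1 + single a 1 = m"
      using True by (intro poly_mapping_eqI) (auto simp: lookup_add lookup_minus lookup_single when_def)
    with True show ?thesis
      unfolding lookup_add lookup_pdiff pvar_mult
      by (cases "a = v") (simp_all add: lookup_add lookup_minus lookup_single plus_minus minus_plus ring_distribs)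
  next
    case False
    then show ?thesis
      unfolding lookup_add lookup_pdiff pvar_mult
      by (cases "a = v") (auto simp: lookup_add lookup_single plus_minus)
  qed
qed

section \<open>Linear algebra\<close>

text \<open>Row rank \<open>\<le>\<close> column rank for the matrix \<open>A\<close>, whose columns are read off from the
  vectors \<open>col i\<close> at the positions \<open>\<mu> j\<close> and whose rows are realised as combinations of
  arbitrary vectors \<open>g i\<close>.\<close>

lemma dim_row_combinations_le_dim_columns:
  fixes col :: "'i \<Rightarrow> ('u \<Rightarrow>\<^sub>0 nat) \<Rightarrow>\<^sub>0 'a::field" and g :: "'i \<Rightarrow> ('v \<Rightarrow>\<^sub>0 nat) \<Rightarrow>\<^sub>0 'a"
    and A :: "'j \<Rightarrow> 'i \<Rightarrow> 'a" and \<mu> :: "'j \<Rightarrow> ('u \<Rightarrow>\<^sub>0 nat)"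
  assumes fin: "finite I" and A: "\<And>i j. i \<in> I \<Longrightarrow> j \<in> J \<Longrightarrow> lookup (col i) (\<mu> j) = A j i"
  shows "poly.dim ((\<lambda>j. \<Sum>i\<in>I. sc (A j i) (g i)) ` J) \<le> poly.dim (col ` I)"
proof -
  obtain B where B: "B \<subseteq> col ` I" "poly.independent B" "col ` I \<subseteq> poly.span B"
    using poly.maximal_independent_subset[of "col ` I"] by blast
  have fB: "finite B" using B(1) fin finite_subset by blast
  have card_B: "card B = poly.dim (col ` I)" using poly.basis_card_eq_dim B by blast
  have "\<forall>i\<in>I. \<exists>u. col i = (\<Sum>b\<in>B. sc (u b) b)"
    using B(3) unfolding poly.span_finite[OF fB] by auto
  then obtain \<beta> where \<beta>: "\<And>i. i \<in> I \<Longrightarrow> col i = (\<Sum>b\<in>B. sc (\<beta> i b) b)" by metis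
  have "\<forall>b\<in>B. \<exists>i\<in>I. col i = b" using B(1) by auto
  then obtain l where l: "\<And>b. b \<in> B \<Longrightarrow> l b \<in> I \<and> col (l b) = b" by metis
  define w where "w b = (\<Sum>i\<in>I. sc (\<beta> i b) (g i))" for b
  have A_expand: "A j i = (\<Sum>b\<in>B. \<beta> i b * A j (l b))" if "i \<in> I" "j \<in> J" for i j
  proof -
    have "A j i = (\<Sum>b\<in>B. \<beta> i b * lookup b (\<mu> j))"
      using A[OF that] \<beta>[OF that(1)] by (simp add: lookup_sum)
    also have "\<dots> = (\<Sum>b\<in>B. \<beta> i b * A j (l b))"
    proof (rule sum.cong)
      fix b assume "b \<in> B"
      then show "\<beta> i b * lookup b (\<mu> j) = \<beta> i b * A j (l b)"
        using A[of "l b" j] l[of b] that(2) by simp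
    qed simp
    finally show ?thesis .
  qed
  have row: "(\<Sum>i\<in>I. sc (A j i) (g i)) = (\<Sum>b\<in>B. sc (A j (l b)) (w b))" if "j \<in> J" for j
  proof -
    have "(\<Sum>i\<in>I. sc (A j i) (g i)) = (\<Sum>i\<in>I. \<Sum>b\<in>B. sc (A j (l b)) (sc (\<beta> i b) (g i)))"
      using A_expand that by (intro sum.cong) (simp_all add: poly.scale_sum_left mult.commute)
    also have "\<dots> = (\<Sum>b\<in>B. sc (A j (l b)) (w b))"
      by (subst sum.swap) (simp add: w_def poly.scale_sum_right)
    finally show ?thesis .
  qed
  have "(\<Sum>b\<in>B. sc (A j (l b)) (w b)) \<in> poly.span (w ` B)" for j
    by (intro poly.span_sum poly.span_scale poly.span_base) simp
  then have "(\<lambda>j. \<Sum>i\<in>I. sc (A j i) (g i)) ` J \<subseteq> poly.span (w ` B)"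
    using row by auto
  then have "poly.dim ((\<lambda>j. \<Sum>i\<in>I. sc (A j i) (g i)) ` J) \<le> card (w ` B)"
    using fB by (intro poly.dim_le_card) auto
  also have "\<dots> \<le> card B" using fB by (rule card_image_le)
  finally show ?thesis using card_B by simp
qed

lemma independent_span_Int_span:
  fixes C :: "(('v \<Rightarrow>\<^sub>0 nat) \<Rightarrow>\<^sub>0 'a::field) set"
  assumes C: "poly.independent C" "finite C" and "D \<subseteq> C" "B \<subseteq> C" "D \<inter> B = {}"
    and x: "x \<in> poly.span D" "x \<in> poly.span B"
  shows "x = 0"
proof -
  have fD: "finite D" and fB: "finite B" using C(2) assms(3,4) finite_subset by blast+
  obtain u where u: "x = (\<Sum>d\<in>D. sc (u d) d)" using x(1) unfolding poly.span_finite[OF fD] by blast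
  obtain w where w: "x = (\<Sum>b\<in>B. sc (w b) b)" using x(2) unfolding poly.span_finite[OF fB] by blast
  define h where "h c = (if c \<in> D then u c else - w c)" for c
  have "(\<Sum>c\<in>D \<union> B. sc (h c) c) = (\<Sum>c\<in>D. sc (h c) c) + (\<Sum>c\<in>B. sc (h c) c)"
    using fD fB assms(5) by (rule sum.union_disjoint)
  also have "(\<Sum>c\<in>D. sc (h c) c) = x" unfolding u by (rule sum.cong) (auto simp: h_def)
  also have "(\<Sum>c\<in>B. sc (h c) c) = - x" unfolding w using assms(5)
    by (simp add: h_def poly.scale_minus_left sum_negf[symmetric]) (rule sum.cong, auto)
  finally have "(\<Sum>c\<in>D \<union> B. sc (h c) c) = 0" by simp
  then have "h d = 0" if "d \<in> D" for d
    using poly.independentD[OF C(1)] that fD fB assms(3,4) by blast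
  then show ?thesis unfolding u by (simp add: h_def)
qed

lemma dim_span_eq_dim_kernel_plus_dim_image:
  fixes f :: "(('v \<Rightarrow>\<^sub>0 nat) \<Rightarrow>\<^sub>0 'a::field) \<Rightarrow> (('w \<Rightarrow>\<^sub>0 nat) \<Rightarrow>\<^sub>0 'a)"
  assumes hom: "module_hom sc sc f" and fin: "finite T"
  shows "poly.dim (poly.span T) = poly.dim (poly.span T \<inter> {x. f x = 0}) + poly.dim (f ` poly.span T)"
proof -
  interpret f: module_hom sc sc f by (rule hom)
  let ?V = "poly.span T"
  let ?K = "?V \<inter> {x. f x = 0}"
  obtain B where B: "B \<subseteq> ?K" "poly.independent B" "?K \<subseteq> poly.span B"
    using poly.maximal_independent_subset[of ?K] by blast
  obtain C where C: "B \<subseteq> C" "C \<subseteq> ?V" "poly.independent C" "?V \<subseteq> poly.span C"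
    using poly.maximal_independent_subset_extend[of B ?V] B by blast
  have fC: "finite C" using poly.independent_span_bound[OF fin C(3)] C(2) by blast
  have fB: "finite B" using fC C(1) finite_subset by blast
  define D where "D = C - B"
  have span_C: "poly.span C = ?V"
    using C(2,4) poly.span_minimal[OF C(2)] by auto
  have "x = 0" if x: "x \<in> poly.span D" "f x = 0" for x
  proof -
    have "x \<in> ?V" using x(1) poly.span_mono[of D C] span_C by (auto simp: D_def)
    then have "x \<in> poly.span B" using x(2) B(3) by auto
    then show "x = 0" using independent_span_Int_span[OF C(3) fC _ C(1) _ x(1)] by (auto simp: D_def)
  qed
  then have inj: "inj_on f (poly.span D)"
    using f.inj_on_iff_eq_0[OF poly.subspace_span] by blast
  have "f ` ?V = poly.span (f ` D)"
  proof -
    have "f c \<in> poly.span (f ` D)" if "c \<in> C" for c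
    proof (cases "c \<in> B")
      case True
      then show ?thesis using B(1) by (auto simp: poly.span_zero)
    next
      case False
      then show ?thesis using that by (intro poly.span_base) (simp add: D_def)
    qed
    then have "poly.span (f ` C) = poly.span (f ` D)"
      by (auto simp: poly.span_eq D_def intro: poly.span_base)
    then show ?thesis using f.span_image span_C by simp
  qed
  moreover have "poly.independent (f ` D)"
    using f.independent_injective_image[OF poly.independent_mono[OF C(3)] inj] by (auto simp: D_def)
  moreover have "card (f ` D) = card D"
    using inj poly.span_superset[of D] by (intro card_image) (rule inj_on_subset)
  moreover have "poly.dim ?V = card C" "poly.dim ?K = card B"
    using poly.basis_card_eq_dim[OF C(2) C(4) C(3)] poly.basis_card_eq_dim[OF B(1) B(3) B(2)] by simp_all
  moreover have "card C = card B + card D"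
    unfolding D_def using card_Diff_subset[OF fB C(1)] card_mono[OF fC C(1)] by simp
  ultimately show ?thesis by (simp add: poly.dim_eq_card_independent)
qed

section \<open>Slim sets and the polynomials \<open>X\<^sub>i\<close>, \<open>Z\<^sub>H\<close>\<close>

lemma finite_tiered_edges: "finite (tiered_edges n t)"
proof -
  have "tiered_edges n t \<subseteq> {1..n} \<times> {1..n}" by (auto simp: tiered_edges_def)
  then show ?thesis by (rule finite_subset) simp
qed

lemma tiered_edgesD: "e \<in> tiered_edges n t \<Longrightarrow> fst e < snd e \<and> fst e \<in> {1..n} \<and> snd e \<in> {1..n}"
  by (auto simp: tiered_edges_def)

definition slim_sets :: "nat \<Rightarrow> (nat \<Rightarrow> nat) \<Rightarrow> nat \<Rightarrow> (nat \<times> nat) set set" where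
  "slim_sets n t k = {H. slim n t H \<and> card H = k}"

lemma slim_subset: "slim n t H \<Longrightarrow> H \<subseteq> tiered_edges n t"
  by (simp add: slim_def)

lemma finite_slim: "slim n t H \<Longrightarrow> finite H"
  by (rule finite_subset[OF slim_subset finite_tiered_edges])

lemma finite_Collect_slim: "finite {H. slim n t H}"
proof -
  have "{H. slim n t H} \<subseteq> Pow (tiered_edges n t)" using slim_subset by blast
  then show ?thesis by (rule finite_subset) (simp add: finite_tiered_edges)
qed

lemma finite_slim_sets: "finite (slim_sets n t k)"
  using finite_Collect_slim by (rule rev_finite_subset) (auto simp: slim_sets_def)

lemma slim_antimono: "slim n t S \<Longrightarrow> H \<subseteq> S \<Longrightarrow> slim n t H"
proof -
  assume S: "slim n t S" and "H \<subseteq> S"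
  let ?E = "tiered_edges n t"
  have "(?E - S) \<union> (?E - S)\<inverse> \<subseteq> (?E - H) \<union> (?E - H)\<inverse>" using \<open>H \<subseteq> S\<close> by blast
  then have "((?E - S) \<union> (?E - S)\<inverse>)\<^sup>* \<subseteq> ((?E - H) \<union> (?E - H)\<inverse>)\<^sup>*" by (rule rtrancl_mono)
  moreover have "H \<subseteq> ?E" using S \<open>H \<subseteq> S\<close> by (auto simp: slim_def)
  ultimately show "slim n t H"
    using S unfolding slim_def graph_connected_def by blast
qed

definition inc_coeff :: "nat \<Rightarrow> nat \<times> nat \<Rightarrow> 'a::comm_ring_1" where
  "inc_coeff v e = (if fst e = v then 1 else if snd e = v then -1 else 0)"

lemma Xpoly_eq: "Xpoly n t v = (\<Sum>e\<in>tiered_edges n t. single (single e 1) (inc_coeff v e))"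
  unfolding Xpoly_def pvar_def inc_coeff_def by (rule sum.cong) (auto simp: single_uminus)

lemma homog_in_prod_Xpoly: "homog_in (tiered_edges n t) k (\<Prod>j<k. Xpoly n t (f j))"
proof -
  have "homog_in (tiered_edges n t) 1 (Xpoly n t v)" for v
    unfolding Xpoly_eq by (intro homog_in_sum homog_in_single) auto
  then have "homog_in (tiered_edges n t) (card {..<k}) (\<Prod>j<k. Xpoly n t (f j))"
    by (intro homog_in_prod) auto
  then show ?thesis by simp
qed

lemma Zpoly_insert: "finite S \<Longrightarrow> e \<notin> S \<Longrightarrow> Zpoly (insert e S) = (pvar (fst e) - pvar (snd e)) * Zpoly S"
  unfolding Zpoly_def by simp

lemma homog_in_Zpoly:
  assumes "H \<subseteq> tiered_edges n t"
  shows "homog_in {1..n} (card H) (Zpoly H :: (nat \<Rightarrow>\<^sub>0 nat) \<Rightarrow>\<^sub>0 'a::field)"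
  unfolding Zpoly_def
proof (rule homog_in_prod)
  show "finite H" using assms finite_tiered_edges finite_subset by blast
  fix e assume "e \<in> H"
  then have "fst e \<in> {1..n}" "snd e \<in> {1..n}" using assms tiered_edgesD by blast+
  then show "homog_in {1..n} 1 (pvar (fst e) - pvar (snd e) :: (nat \<Rightarrow>\<^sub>0 nat) \<Rightarrow>\<^sub>0 'a)"
    unfolding pvar_def by (intro homog_in_diff homog_in_single) auto
qed

section \<open>Coefficients of products of the \<open>X\<^sub>i\<close>\<close>

lemma lookup_mult_linear_set_mon:
  fixes P :: "('e \<Rightarrow>\<^sub>0 nat) \<Rightarrow>\<^sub>0 'a::comm_ring_1"
  assumes E: "finite E" and S: "S \<subseteq> E"
  shows "lookup (P * (\<Sum>e\<in>E. single (single e 1) (c e))) (set_mon S)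
    = (\<Sum>e\<in>S. c e * lookup P (set_mon (S - {e})))"
proof -
  have fS: "finite S" using E S finite_subset by blast
  have "lookup (P * (\<Sum>e\<in>E. single (single e 1) (c e))) (set_mon S)
      = (\<Sum>e\<in>E. lookup (single (single e 1) (c e) * P) (set_mon S))"
    by (simp add: sum_distrib_left mult.commute lookup_sum)
  also have "\<dots> = (\<Sum>e\<in>E. if e \<in> S then c e * lookup P (set_mon (S - {e})) else 0)"
    by (rule sum.cong) (auto simp: lookup_single_var_mult lookup_set_mon set_mon_minus fS)
  also have "\<dots> = (\<Sum>e\<in>S. c e * lookup P (set_mon (S - {e})))"
    using S by (simp add: sum.inter_restrict[OF E, symmetric] Int_absorb1)
  finally show ?thesis .
qed

text \<open>The derivatives of \<open>Z\<^sub>S\<close> obey the same recursion as the coefficients of \<open>\<phi>\<^sub>S\<close> in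
  products of the \<open>X\<^sub>i\<close>.\<close>

lemma pdiff_Zpoly:
  assumes "finite S" "\<forall>e\<in>S. fst e \<noteq> snd e"
  shows "pdiff v (Zpoly S :: (nat \<Rightarrow>\<^sub>0 nat) \<Rightarrow>\<^sub>0 'a::field)
    = (\<Sum>e\<in>S. sc (inc_coeff v e) (Zpoly (S - {e})))"
  using assms
proof (induction S rule: finite_induct)
  case empty
  have "m + single v 1 \<noteq> 0" for m :: "nat \<Rightarrow>\<^sub>0 nat"
    by (metis add_eq_0_iff_both_eq_0 lookup_add lookup_single_eq lookup_zero zero_neq_one)
  then show ?case by (intro poly_mapping_eqI) (simp add: Zpoly_def lookup_pdiff lookup_one when_def)
next
  case (insert e0 S)
  define a where "a = fst e0"
  define b where "b = snd e0"
  have inc_e0: "inc_coeff v e0 = (if a = v then 1 else 0) - (if b = v then (1::'a) else 0)"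
    using insert.prems by (auto simp: inc_coeff_def a_def b_def)
  have remove: "Zpoly (insert e0 S - {e}) = (pvar a - pvar b) * Zpoly (S - {e})" if "e \<in> S" for e
  proof -
    have "insert e0 S - {e} = insert e0 (S - {e})" using insert.hyps that by auto
    then show ?thesis using insert.hyps by (simp add: Zpoly_insert a_def b_def)
  qed
  have IH: "pdiff v (Zpoly S) = (\<Sum>e\<in>S. sc (inc_coeff v e) (Zpoly (S - {e}) :: (nat \<Rightarrow>\<^sub>0 nat) \<Rightarrow>\<^sub>0 'a))"
    using insert.IH insert.prems by simp
  have "pdiff v (Zpoly (insert e0 S) :: (nat \<Rightarrow>\<^sub>0 nat) \<Rightarrow>\<^sub>0 'a)
      = pdiff v (pvar a * Zpoly S) - pdiff v (pvar b * Zpoly S)"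
    using insert.hyps by (simp add: Zpoly_insert a_def b_def left_diff_distrib pdiff_diff)
  also have "\<dots> = sc (inc_coeff v e0) (Zpoly S) + (pvar a - pvar b) * pdiff v (Zpoly S)"
    unfolding pdiff_pvar_mult inc_e0
    by (cases "a = v"; cases "b = v") (simp_all add: algebra_simps poly.scale_minus_left)
  also have "(pvar a - pvar b) * pdiff v (Zpoly S :: (nat \<Rightarrow>\<^sub>0 nat) \<Rightarrow>\<^sub>0 'a)
      = (\<Sum>e\<in>S. sc (inc_coeff v e) (Zpoly (insert e0 S - {e})))"
    unfolding IH by (simp add: remove sum_distrib_left sc_eq_mult mult.left_commute)
  also have "sc (inc_coeff v e0) (Zpoly S) + \<dots> = (\<Sum>e\<in>insert e0 S. sc (inc_coeff v e) (Zpoly (insert e0 S - {e})))"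
    using insert.hyps by (simp add: insert_Diff_if)
  finally show ?case .
qed

definition mon_seq :: "nat \<Rightarrow> (nat \<Rightarrow> 'v) \<Rightarrow> ('v \<Rightarrow>\<^sub>0 nat)" where
  "mon_seq k f = (\<Sum>j<k. single (f j) 1)"

lemma mon_seq_Suc: "mon_seq (Suc k) f = mon_seq k f + single (f k) 1"
  by (simp add: mon_seq_def)

definition mon_fact :: "('v \<Rightarrow>\<^sub>0 nat) \<Rightarrow> nat" where
  "mon_fact m = (\<Prod>x\<in>keys m. fact (lookup m x))"

lemma mon_fact_superset:
  "finite A \<Longrightarrow> keys m \<subseteq> A \<Longrightarrow> mon_fact m = (\<Prod>x\<in>A. fact (lookup m x))"
  unfolding mon_fact_def by (rule prod.mono_neutral_left) (auto simp: in_keys_iff)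

lemma mon_fact_pos: "mon_fact m > 0"
  unfolding mon_fact_def by (simp add: prod_pos)

lemma mon_fact_add_single: "mon_fact (m + single v 1) = mon_fact m * (lookup m v + 1)"
proof -
  let ?A = "insert v (keys m)"
  have "mon_fact (m + single v 1) = (\<Prod>x\<in>?A. fact (lookup (m + single v 1) x))"
    using keys_add[of m "single v 1"] by (intro mon_fact_superset) auto
  also have "\<dots> = fact (lookup m v + 1) * (\<Prod>x\<in>?A - {v}. fact (lookup (m + single v 1) x))"
    by (subst prod.remove[of _ v]) (auto simp: lookup_add)
  also have "(\<Prod>x\<in>?A - {v}. fact (lookup (m + single v 1) x)) = (\<Prod>x\<in>?A - {v}. fact (lookup m x))"
    by (rule prod.cong) (auto simp: lookup_add lookup_single when_def)
  also have "fact (lookup m v + 1) = fact (lookup m v) * (lookup m v + 1)"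
    by (simp add: One_nat_def)
  finally have "mon_fact (m + single v 1)
      = fact (lookup m v) * (lookup m v + 1) * (\<Prod>x\<in>?A - {v}. fact (lookup m x))" .
  moreover have "mon_fact m = fact (lookup m v) * (\<Prod>x\<in>?A - {v}. fact (lookup m x))"
    by (subst mon_fact_superset[of ?A]) (auto simp: prod.insert_remove)
  ultimately show ?thesis by simp
qed

lemma lookup_prod_Xpoly_set_mon:
  assumes "S \<subseteq> tiered_edges n t" "card S = k"
  shows "lookup (\<Prod>j<k. Xpoly n t (f j) :: ((nat \<times> nat) \<Rightarrow>\<^sub>0 nat) \<Rightarrow>\<^sub>0 'a::field) (set_mon S)
    = of_nat (mon_fact (mon_seq k f)) * lookup (Zpoly S :: (nat \<Rightarrow>\<^sub>0 nat) \<Rightarrow>\<^sub>0 'a) (mon_seq k f)"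
  using assms
proof (induction k arbitrary: S)
  case 0
  then have "S = {}" using finite_tiered_edges finite_subset by fastforce
  then show ?case by (simp add: set_mon_def mon_seq_def mon_fact_def Zpoly_def)
next
  case (Suc k)
  have fS: "finite S" using Suc.prems finite_tiered_edges finite_subset by blast
  have loopless: "\<forall>e\<in>S. fst e \<noteq> snd e" using Suc.prems(1) tiered_edgesD by fastforce
  let ?m = "mon_seq k f" and ?v = "f k"
  let ?Z = "\<lambda>S. Zpoly S :: (nat \<Rightarrow>\<^sub>0 nat) \<Rightarrow>\<^sub>0 'a"
  have "lookup (\<Prod>j<Suc k. Xpoly n t (f j) :: ((nat \<times> nat) \<Rightarrow>\<^sub>0 nat) \<Rightarrow>\<^sub>0 'a) (set_mon S)
      = (\<Sum>e\<in>S. inc_coeff ?v e * lookup (\<Prod>j<k. Xpoly n t (f j) :: ((nat \<times> nat) \<Rightarrow>\<^sub>0 nat) \<Rightarrow>\<^sub>0 'a) (set_mon (S - {e})))"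
    using lookup_mult_linear_set_mon[OF finite_tiered_edges Suc.prems(1)] by (simp add: Xpoly_eq)
  also have "\<dots> = (\<Sum>e\<in>S. inc_coeff ?v e * (of_nat (mon_fact ?m) * lookup (?Z (S - {e})) ?m))"
  proof (rule sum.cong)
    fix e assume "e \<in> S"
    then have "S - {e} \<subseteq> tiered_edges n t" "card (S - {e}) = k" using Suc.prems fS by auto
    then show "inc_coeff ?v e * lookup (\<Prod>j<k. Xpoly n t (f j)) (set_mon (S - {e}))
        = inc_coeff ?v e * (of_nat (mon_fact ?m) * lookup (?Z (S - {e})) ?m)"
      by (simp add: Suc.IH)
  qed simp
  also have "\<dots> = of_nat (mon_fact ?m) * lookup (pdiff ?v (?Z S)) ?m"
    by (simp add: pdiff_Zpoly[OF fS loopless] lookup_sum sum_distrib_left algebra_simps)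
  also have "\<dots> = of_nat (mon_fact (mon_seq (Suc k) f)) * lookup (?Z S) (mon_seq (Suc k) f)"
    by (simp add: lookup_pdiff mon_seq_Suc mon_fact_add_single)
  finally show ?case .
qed

section \<open>The ideal \<open>I\<^sub>G\<close> in degree \<open>k\<close>\<close>

lemma ideal_gen_0: "0 \<in> ideal_gen G"
  unfolding ideal_gen_def by (auto intro!: exI[of _ "{}"])

lemma ideal_gen_mult: "s \<in> G \<Longrightarrow> r * s \<in> ideal_gen G"
  unfolding ideal_gen_def by (auto intro!: exI[of _ "{s}"] exI[of _ "\<lambda>_. r"])

lemma ideal_gen_add:
  assumes "p \<in> ideal_gen G" "q \<in> ideal_gen G"
  shows "p + q \<in> ideal_gen G"
proof -
  obtain F1 r1 where F1: "finite F1" "F1 \<subseteq> G" "p = (\<Sum>s\<in>F1. r1 s * s)"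
    using assms(1) unfolding ideal_gen_def by blast
  obtain F2 r2 where F2: "finite F2" "F2 \<subseteq> G" "q = (\<Sum>s\<in>F2. r2 s * s)"
    using assms(2) unfolding ideal_gen_def by blast
  define r where "r s = (if s \<in> F1 then r1 s else 0) + (if s \<in> F2 then r2 s else 0)" for s
  have "(\<Sum>s\<in>F1 \<union> F2. r s * s)
      = (\<Sum>s\<in>F1 \<union> F2. if s \<in> F1 then r1 s * s else 0) + (\<Sum>s\<in>F1 \<union> F2. if s \<in> F2 then r2 s * s else 0)"
    unfolding sum.distrib[symmetric] by (rule sum.cong) (auto simp: r_def distrib_right)
  also have "\<dots> = p + q"
    using F1 F2 by (simp add: sum.inter_restrict[symmetric] Int_absorb1 Int_absorb2)
  finally show ?thesis
    using F1 F2 unfolding ideal_gen_def by (intro CollectI exI[of _ "F1 \<union> F2"] exI[of _ r]) auto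
qed

lemma ideal_gen_sum: "(\<And>x. x \<in> A \<Longrightarrow> f x \<in> ideal_gen G) \<Longrightarrow> sum f A \<in> ideal_gen G"
  by (induction A rule: infinite_finite_induct) (simp_all add: ideal_gen_0 ideal_gen_add)

definition Phi_gens :: "'a itself \<Rightarrow> nat \<Rightarrow> (nat \<Rightarrow> nat) \<Rightarrow> (((nat \<times> nat) \<Rightarrow>\<^sub>0 nat) \<Rightarrow>\<^sub>0 'a::field) set" where
  "Phi_gens _ n t = {pvar e * pvar e | e. e \<in> tiered_edges n t}
      \<union> {(\<Prod>e\<in>H. pvar e) | H. H \<subseteq> tiered_edges n t \<and> \<not> slim n t H}"

lemma Phi_ideal_eq: "Phi_ideal TYPE('a::field) n t = ideal_gen (Phi_gens TYPE('a) n t)"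
  unfolding Phi_ideal_def Phi_gens_def ..

lemma pvar_square: "pvar e * pvar e = single (single e 1 + single e 1) (1::'a::comm_ring_1)"
  by (simp add: pvar_def mult_single)

lemma Phi_gens_cases:
  assumes "s \<in> Phi_gens TYPE('a::field) n t"
  obtains e where "e \<in> tiered_edges n t" "s = single (single e 1 + single e 1) 1"
    | H where "H \<subseteq> tiered_edges n t" "\<not> slim n t H" "finite H" "s = single (set_mon H) 1"
proof -
  consider (square) e where "e \<in> tiered_edges n t" "s = pvar e * pvar e"
    | (non_slim) H where "H \<subseteq> tiered_edges n t" "\<not> slim n t H" "s = (\<Prod>e\<in>H. pvar e)"
    using assms unfolding Phi_gens_def by blast
  then show thesis
  proof cases
    case square
    then show thesis using that(1) by (simp add: pvar_square)
  next
    case non_slim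
    moreover have "finite H" using non_slim(1) finite_tiered_edges finite_subset by blast
    ultimately show thesis using that(2) by (simp add: prod_pvar)
  qed
qed

text \<open>No generator of \<open>I\<^sub>G\<close> divides a square-free slim monomial.\<close>

lemma lookup_Phi_ideal_set_mon:
  assumes p: "p \<in> Phi_ideal TYPE('a::field) n t" and S: "S \<in> slim_sets n t k"
  shows "lookup p (set_mon S) = 0"
proof -
  obtain F r where F: "F \<subseteq> Phi_gens TYPE('a) n t" "p = (\<Sum>s\<in>F. r s * s)"
    using p unfolding Phi_ideal_eq ideal_gen_def by blast
  have fS: "finite S" and slim_S: "slim n t S" using S finite_slim by (auto simp: slim_sets_def)
  have "lookup (r s * s) (set_mon S) = 0" if "s \<in> Phi_gens TYPE('a) n t" for s
    using that
  proof (cases rule: Phi_gens_cases)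
    case (1 e)
    have "set_mon S \<noteq> a + (single e 1 + single e 1)" for a
      using arg_cong[where f = "\<lambda>m. lookup m e"] lookup_set_mon[OF fS, of e]
      by (auto simp: lookup_add split: if_splits)
    then show ?thesis using 1 by (simp add: lookup_mult_single_eq_0)
  next
    case (2 H)
    have "set_mon S \<noteq> a + set_mon H" for a
    proof
      assume a: "set_mon S = a + set_mon H"
      have "H \<subseteq> S"
      proof
        fix x assume "x \<in> H"
        then have "lookup (set_mon S) x \<noteq> 0" using a 2(3) by (simp add: lookup_add lookup_set_mon)
        then show "x \<in> S" using lookup_set_mon[OF fS, of x] by (auto split: if_splits)
      qed
      then show False using slim_antimono[OF slim_S] 2(2) by blast
    qed
    then show ?thesis using 2 by (simp add: lookup_mult_single_eq_0)
  qed
  then show ?thesis using F by (simp add: lookup_sum subset_iff)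
qed

text \<open>Every other monomial of degree \<open>k\<close> in the edge variables is divisible by some \<open>\<phi>\<^sub>e\<^sup>2\<close> or by
  \<open>\<phi>\<^sub>H\<close> with \<open>H\<close> not slim.\<close>

lemma single_in_Phi_ideal:
  assumes "keys m \<subseteq> tiered_edges n t" "mon_deg m = k" "\<forall>S\<in>slim_sets n t k. m \<noteq> set_mon S"
  shows "single m c \<in> Phi_ideal TYPE('a::field) n t"
proof -
  have "\<exists>a s. s \<in> Phi_gens TYPE('a) n t \<and> single m c = single a c * s"
  proof (cases "\<exists>e. 2 \<le> lookup m e")
    case True
    then obtain e where e: "2 \<le> lookup m e" by blast
    then have "e \<in> tiered_edges n t" using assms(1) by (force simp: in_keys_iff)
    then have "pvar e * pvar e \<in> Phi_gens TYPE('a) n t" unfolding Phi_gens_def by blast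
    moreover have "m = (m - (single e 1 + single e 1)) + (single e 1 + single e 1)"
      using e by (intro poly_mapping_eqI) (auto simp: lookup_add lookup_minus lookup_single when_def)
    then have "single m c = single (m - (single e 1 + single e 1)) c * (pvar e * pvar e)"
      unfolding pvar_square mult_single by simp
    ultimately show ?thesis by blast
  next
    case False
    have "lookup m x \<le> 1" for x
    proof -
      have "\<not> 2 \<le> lookup m x" using False by blast
      then show ?thesis by linarith
    qed
    then have m: "m = set_mon (keys m)" by (intro set_mon_eq_if_no_square) simp
    have "\<not> slim n t (keys m)"
      using assms(2,3) mon_deg_set_mon[of "keys m"] m by (auto simp: slim_sets_def)
    then have "(\<Prod>e\<in>keys m. pvar e) \<in> Phi_gens TYPE('a) n t" using assms(1) unfolding Phi_gens_def by blast
    moreover have "single m c = single 0 c * (\<Prod>e\<in>keys m. pvar e)"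
      by (subst m) (simp add: prod_pvar mult_single)
    ultimately show ?thesis by blast
  qed
  then show ?thesis unfolding Phi_ideal_eq by (auto simp: ideal_gen_mult)
qed

lemma in_Phi_ideal_if_slim_coeffs_zero:
  assumes "homog_in (tiered_edges n t) k p" and "\<forall>S\<in>slim_sets n t k. lookup p (set_mon S) = 0"
  shows "p \<in> Phi_ideal TYPE('a::field) n t"
proof -
  have "single m (lookup p m) \<in> Phi_ideal TYPE('a) n t" if "m \<in> keys p" for m
    using assms that by (intro single_in_Phi_ideal) (auto simp: homog_in_def in_keys_iff)
  then have "(\<Sum>m\<in>keys p. single m (lookup p m)) \<in> Phi_ideal TYPE('a) n t"
    unfolding Phi_ideal_eq by (rule ideal_gen_sum)
  then show ?thesis by (simp add: sum_single_lookup)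
qed

section \<open>Rank computation\<close>

definition slim_proj :: "nat \<Rightarrow> (nat \<Rightarrow> nat) \<Rightarrow> nat \<Rightarrow> (((nat \<times> nat) \<Rightarrow>\<^sub>0 nat) \<Rightarrow>\<^sub>0 'a::field)
    \<Rightarrow> (((nat \<times> nat) \<Rightarrow>\<^sub>0 nat) \<Rightarrow>\<^sub>0 'a)" where
  "slim_proj n t k p = (\<Sum>S\<in>slim_sets n t k. single (set_mon S) (lookup p (set_mon S)))"

lemma lookup_sum_single_set_mon:
  assumes "finite \<S>" "\<forall>S'\<in>\<S>. finite S'" "S \<in> \<S>"
  shows "lookup (\<Sum>S'\<in>\<S>. single (set_mon S') (h S')) (set_mon S) = (h S :: 'a::comm_ring_1)"
proof -
  have "set_mon S' = set_mon S \<longleftrightarrow> S' = S" if "S' \<in> \<S>" for S'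
    using assms that by (metis keys_set_mon)
  then have "lookup (\<Sum>S'\<in>\<S>. single (set_mon S') (h S')) (set_mon S) = (\<Sum>S'\<in>\<S>. if S' = S then h S' else 0)"
    unfolding lookup_sum by (intro sum.cong) (auto simp: lookup_single when_def)
  also have "\<dots> = h S" using assms by simp
  finally show ?thesis .
qed

lemma lookup_sum_single_slim_sets:
  "S \<in> slim_sets n t k \<Longrightarrow> lookup (\<Sum>S'\<in>slim_sets n t k. single (set_mon S') (h S')) (set_mon S) = (h S :: 'a::comm_ring_1)"
  by (rule lookup_sum_single_set_mon[OF finite_slim_sets]) (auto simp: slim_sets_def finite_slim)

lemma slim_proj_eq_0_iff: "slim_proj n t k p = 0 \<longleftrightarrow> (\<forall>S\<in>slim_sets n t k. lookup p (set_mon S) = 0)"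
proof
  assume "slim_proj n t k p = 0"
  then show "\<forall>S\<in>slim_sets n t k. lookup p (set_mon S) = 0"
    using lookup_sum_single_slim_sets[of _ n t k "\<lambda>S. lookup p (set_mon S)"] by (simp add: slim_proj_def)
qed (simp add: slim_proj_def)

lemma module_hom_slim_proj: "module_hom sc sc (slim_proj n t k :: _ \<Rightarrow> ((nat \<times> nat) \<Rightarrow>\<^sub>0 nat) \<Rightarrow>\<^sub>0 'a::field)"
  unfolding module_hom_iff
  by (simp add: poly.module_axioms slim_proj_def lookup_add single_add sum.distrib sc_single
      poly.scale_sum_right)

lemma span_C_gens_Int_Phi_ideal:
  "poly.span (C_gens TYPE('a::field) n t k) \<inter> Phi_ideal TYPE('a) n t
    = poly.span (C_gens TYPE('a) n t k) \<inter> {p. slim_proj n t k p = 0}"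
proof -
  have "homog_in (tiered_edges n t) k p" if "p \<in> poly.span (C_gens TYPE('a) n t k)" for p
    using that by (rule homog_in_span[rotated]) (auto simp: C_gens_def homog_in_prod_Xpoly)
  then show ?thesis
    by (auto simp: slim_proj_eq_0_iff lookup_Phi_ideal_set_mon intro!: in_Phi_ideal_if_slim_coeffs_zero)
qed

definition seqs :: "nat \<Rightarrow> nat \<Rightarrow> (nat \<Rightarrow> nat) set" where
  "seqs n k = {f. \<forall>j<k. f j \<in> {1..n}}"

lemma finite_image_seqs:
  assumes "\<And>f g. (\<forall>j<k. f j = g j) \<Longrightarrow> h f = h g"
  shows "finite (h ` seqs n k)"
proof -
  have "h ` seqs n k \<subseteq> h ` (PiE {..<k} (\<lambda>_. {1..n}))"
  proof
    fix y assume "y \<in> h ` seqs n k"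
    then obtain f where f: "f \<in> seqs n k" "y = h f" by blast
    have "restrict f {..<k} \<in> PiE {..<k} (\<lambda>_. {1..n})" using f(1) by (simp add: seqs_def restrict_PiE_iff)
    moreover have "h (restrict f {..<k}) = h f" by (rule assms) simp
    ultimately show "y \<in> h ` (PiE {..<k} (\<lambda>_. {1..n}))" using f(2) by (metis image_eqI)
  qed
  moreover have "finite (h ` (PiE {..<k} (\<lambda>_. {1..n})))" by (intro finite_imageI finite_PiE) auto
  ultimately show ?thesis by (rule finite_subset)
qed

lemma C_gens_eq: "C_gens TYPE('a::field) n t k = (\<lambda>f. \<Prod>j<k. Xpoly n t (f j)) ` seqs n k"
  unfolding C_gens_def seqs_def by auto

lemma finite_C_gens: "finite (C_gens TYPE('a::field) n t k)"
  unfolding C_gens_eq by (rule finite_image_seqs) simp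

definition mons :: "nat \<Rightarrow> nat \<Rightarrow> (nat \<Rightarrow>\<^sub>0 nat) set" where
  "mons n k = mon_seq k ` seqs n k"

lemma finite_mons: "finite (mons n k)"
  unfolding mons_def by (rule finite_image_seqs) (simp add: mon_seq_def)

lemma mon_seq_surj:
  "keys m \<subseteq> A \<Longrightarrow> mon_deg m = k \<Longrightarrow> \<exists>f. (\<forall>j<k. f j \<in> A) \<and> mon_seq k f = m"
proof (induction k arbitrary: m)
  case 0
  then show ?case by (simp add: mon_deg_eq_0_iff mon_seq_def)
next
  case (Suc k)
  then obtain v where v: "v \<in> keys m" by (metis mon_deg_0 ex_in_conv keys_eq_empty nat.distinct(1))
  define m' where "m' = m - single v 1"
  have m: "m = m' + single v 1"
    using v unfolding m'_def by (intro poly_mapping_eqI) (auto simp: in_keys_iff lookup_add lookup_minus lookup_single when_def)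
  then have "mon_deg m' = k" using Suc.prems(2) mon_deg_add[of m' "single v 1"] by simp
  moreover have "keys m' \<subseteq> A" using Suc.prems(1) by (auto simp: m'_def in_keys_iff lookup_minus)
  ultimately obtain f where f: "\<forall>j<k. f j \<in> A" "mon_seq k f = m'" using Suc.IH by blast
  have "mon_seq k (f(k := v)) = mon_seq k f" unfolding mon_seq_def by (rule sum.cong) auto
  then have "mon_seq (Suc k) (f(k := v)) = m" using f(2) m by (simp add: mon_seq_Suc)
  moreover have "\<forall>j<Suc k. (f(k := v)) j \<in> A" using f(1) v Suc.prems(1) by (auto simp: less_Suc_eq)
  ultimately show ?case by blast
qed

lemma keys_Zpoly_subset_mons:
  assumes "S \<in> slim_sets n t k"
  shows "keys (Zpoly S :: (nat \<Rightarrow>\<^sub>0 nat) \<Rightarrow>\<^sub>0 'a::field) \<subseteq> mons n k"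
proof
  fix m assume "m \<in> keys (Zpoly S :: (nat \<Rightarrow>\<^sub>0 nat) \<Rightarrow>\<^sub>0 'a)"
  moreover have "homog_in {1..n} k (Zpoly S :: (nat \<Rightarrow>\<^sub>0 nat) \<Rightarrow>\<^sub>0 'a)"
    using assms homog_in_Zpoly[OF slim_subset] by (auto simp: slim_sets_def)
  ultimately obtain f where "\<forall>j<k. f j \<in> {1..n}" "mon_seq k f = m"
    using mon_seq_surj unfolding homog_in_def by metis
  then show "m \<in> mons n k" unfolding mons_def seqs_def by blast
qed

text \<open>The row of the matrix \<open>(coefficient of z\<^sup>\<alpha> in Z\<^sub>S)\<close> indexed by the monomial \<open>\<alpha>\<close>, written in
  the basis \<open>\<phi>\<^sub>S\<close> of the slim monomials.\<close>

definition Zcoeff_row :: "'a itself \<Rightarrow> nat \<Rightarrow> (nat \<Rightarrow> nat) \<Rightarrow> nat \<Rightarrow> (nat \<Rightarrow>\<^sub>0 nat)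
    \<Rightarrow> (((nat \<times> nat) \<Rightarrow>\<^sub>0 nat) \<Rightarrow>\<^sub>0 'a::field)" where
  "Zcoeff_row _ n t k \<alpha> = (\<Sum>S\<in>slim_sets n t k. single (set_mon S) (lookup (Zpoly S :: (nat \<Rightarrow>\<^sub>0 nat) \<Rightarrow>\<^sub>0 'a) \<alpha>))"

lemma slim_proj_prod_Xpoly:
  "slim_proj n t k (\<Prod>j<k. Xpoly n t (f j)) = sc (of_nat (mon_fact (mon_seq k f))) (Zcoeff_row TYPE('a::field) n t k (mon_seq k f))"
  unfolding slim_proj_def Zcoeff_row_def
  by (auto simp: poly.scale_sum_right sc_single slim_sets_def lookup_prod_Xpoly_set_mon slim_subset
      intro!: sum.cong)

lemma span_slim_proj_C_gens:
  "poly.span (slim_proj n t k ` C_gens TYPE('a::field_char_0) n t k) = poly.span (Zcoeff_row TYPE('a) n t k ` mons n k)"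
proof -
  have "sc (of_nat (mon_fact (mon_seq k f))) (Zcoeff_row TYPE('a) n t k (mon_seq k f)) \<in> poly.span (Zcoeff_row TYPE('a) n t k ` mons n k)"
    if "f \<in> seqs n k" for f
    using that unfolding mons_def by (intro poly.span_scale poly.span_base) blast
  moreover
  \<comment> \<open>Here the characteristic \<open>0\<close> is needed: \<open>\<alpha>!\<close> must be invertible.\<close>
  have "Zcoeff_row TYPE('a) n t k (mon_seq k f) \<in> poly.span (slim_proj n t k ` C_gens TYPE('a) n t k)"
    if "f \<in> seqs n k" for f
  proof -
    let ?d = "of_nat (mon_fact (mon_seq k f)) :: 'a"
    have "?d \<noteq> 0" using mon_fact_pos[of "mon_seq k f"] by simp
    then have "Zcoeff_row TYPE('a) n t k (mon_seq k f) = sc (1 / ?d) (slim_proj n t k (\<Prod>j<k. Xpoly n t (f j)))"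
      by (simp add: slim_proj_prod_Xpoly)
    moreover have "slim_proj n t k (\<Prod>j<k. Xpoly n t (f j)) \<in> slim_proj n t k ` C_gens TYPE('a) n t k"
      using that unfolding C_gens_eq by blast
    ultimately show ?thesis by (simp add: poly.span_base poly.span_scale)
  qed
  ultimately show ?thesis
    unfolding poly.span_eq C_gens_eq mons_def by (auto simp: slim_proj_prod_Xpoly)
qed

lemma dim_Zcoeff_rows:
  "poly.dim (Zcoeff_row TYPE('a::field) n t k ` mons n k) = poly.dim (Zpoly ` slim_sets n t k :: ((nat \<Rightarrow>\<^sub>0 nat) \<Rightarrow>\<^sub>0 'a) set)"
proof (rule antisym)
  have "Zcoeff_row TYPE('a) n t k ` mons n k
      = (\<lambda>\<alpha>. \<Sum>S\<in>slim_sets n t k. sc (lookup (Zpoly S :: (nat \<Rightarrow>\<^sub>0 nat) \<Rightarrow>\<^sub>0 'a) \<alpha>) (single (set_mon S) 1)) ` mons n k"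
    by (simp add: Zcoeff_row_def sc_single)
  also have "poly.dim \<dots> \<le> poly.dim (Zpoly ` slim_sets n t k :: ((nat \<Rightarrow>\<^sub>0 nat) \<Rightarrow>\<^sub>0 'a) set)"
    by (rule dim_row_combinations_le_dim_columns[where \<mu> = id]) (simp_all add: finite_slim_sets)
  finally show "poly.dim (Zcoeff_row TYPE('a) n t k ` mons n k) \<le> \<dots>" .
next
  have "(Zpoly ` slim_sets n t k :: ((nat \<Rightarrow>\<^sub>0 nat) \<Rightarrow>\<^sub>0 'a) set)
      = (\<lambda>S. \<Sum>\<alpha>\<in>mons n k. sc (lookup (Zpoly S :: (nat \<Rightarrow>\<^sub>0 nat) \<Rightarrow>\<^sub>0 'a) \<alpha>) (single \<alpha> 1)) ` slim_sets n t k"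
    by (rule image_cong) (simp_all add: sc_single sum_single_lookup[OF finite_mons keys_Zpoly_subset_mons])
  also have "poly.dim \<dots> \<le> poly.dim (Zcoeff_row TYPE('a) n t k ` mons n k)"
    by (rule dim_row_combinations_le_dim_columns[where \<mu> = set_mon])
      (simp_all add: finite_mons Zcoeff_row_def lookup_sum_single_slim_sets)
  finally show "poly.dim (Zpoly ` slim_sets n t k :: ((nat \<Rightarrow>\<^sub>0 nat) \<Rightarrow>\<^sub>0 'a) set) \<le> \<dots>" .
qed

lemma homog_part_S_space:
  "{p \<in> S_space TYPE('a::field) n t. homog k p} = poly.span (Zpoly ` slim_sets n t k :: ((nat \<Rightarrow>\<^sub>0 nat) \<Rightarrow>\<^sub>0 'a) set)"
proof -
  have "homog (card H) (Zpoly H :: (nat \<Rightarrow>\<^sub>0 nat) \<Rightarrow>\<^sub>0 'a)" if "slim n t H" for H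
    using homog_in_Zpoly[OF slim_subset[OF that]] by (auto simp: homog_iff_homog_in_UNIV intro: homog_in_mono)
  then have "{p \<in> poly.span (Zpoly ` {H. slim n t H}). homog k p}
      = poly.span (Zpoly ` {H \<in> {H. slim n t H}. card H = k} :: ((nat \<Rightarrow>\<^sub>0 nat) \<Rightarrow>\<^sub>0 'a) set)"
    by (intro homog_part_span_image finite_Collect_slim) simp
  then show ?thesis
    unfolding S_space_def setcompr_eq_image slim_sets_def by simp
qed

theorem mainTheorem4:
  fixes n m k :: nat and t :: "nat \<Rightarrow> nat"
  assumes "t ` {1..n} = {1..m}"
  shows "dim_C TYPE('a::field_char_0) n t k = dim_S TYPE('a) n t k"
proof -
  let ?V = "poly.span (C_gens TYPE('a) n t k)"
  have "poly.dim ?V = poly.dim (?V \<inter> {p. slim_proj n t k p = 0}) + poly.dim (slim_proj n t k ` ?V)"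
    by (rule dim_span_eq_dim_kernel_plus_dim_image[OF module_hom_slim_proj finite_C_gens])
  then have "dim_C TYPE('a) n t k = poly.dim (slim_proj n t k ` ?V)"
    unfolding dim_C_def Let_def span_C_gens_Int_Phi_ideal by simp
  also have "slim_proj n t k ` ?V = poly.span (slim_proj n t k ` C_gens TYPE('a) n t k)"
    by (rule module_hom.span_image[OF module_hom_slim_proj, symmetric])
  also have "poly.dim \<dots> = poly.dim (Zpoly ` slim_sets n t k :: ((nat \<Rightarrow>\<^sub>0 nat) \<Rightarrow>\<^sub>0 'a) set)"
    by (simp add: span_slim_proj_C_gens dim_Zcoeff_rows)
  also have "\<dots> = dim_S TYPE('a) n t k"
    by (simp add: dim_S_def homog_part_S_space)
  finally show ?thesis .
qed

end
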